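(* Let $S$ be a semigroup with finite $\mathcal{R}$-height whose kernel is completely simple, and let $A$ be a left ideal of $S$. Let $n$ be the maximum length of a chain of $\mathcal{R}$-classes of $S$ each of which intersects $A$. Then $\mathrm{H}_{\mathcal{R}}(A)\leq 2n-1$.
   Context: For a semigroup $S$, $S^1$ denotes $S$ with an identity adjoined if necessary. Green's preorder: $a\leq_{\mathcal{R}} b$ iff $aS^1\subseteq bS^1$; $\mathcal{R}$ is the associated equivalence. $\mathcal{R}$-classes are ordered by $R_a\leq R_b$ iff $a\leq_{\mathcal{R}} b$, and the $\mathcal{R}$-height $\mathrm{H}_{\mathcal{R}}(S)$ is the supremum of the cardinalities of chains of $\mathcal{R}$-classes. A left ideal is a non-empty subset $A$ with $SA\subseteq A$; $\mathrm{H}_{\mathcal{R}}(A)$ is computed in the semigroup $A$ itself. The kernel of $S$ is its unique minimal ideal. A semigroup is completely simple if it has no proper ideals and has both a minimal right ideal and a minimal left ideal. *)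

theory Defs
  imports Main "HOL-Library.Extended_Nat"
begin

text \<open>A semigroup S is modelled as a type of class semigroup_mult (S = UNIV).
  Notions relative to a subsemigroup T (e.g. a left ideal) are parametrised by the carrier T.\<close>

definition R_le :: "'a::semigroup_mult set \<Rightarrow> 'a \<Rightarrow> 'a \<Rightarrow> bool" where
  "R_le T a b \<longleftrightarrow> a = b \<or> (\<exists>t\<in>T. a = b * t)"   (* a T^1 \<subseteq> b T^1 *)

definition R_eq :: "'a::semigroup_mult set \<Rightarrow> 'a \<Rightarrow> 'a \<Rightarrow> bool" where
  "R_eq T a b \<longleftrightarrow> R_le T a b \<and> R_le T b a"

definition R_class :: "'a::semigroup_mult set \<Rightarrow> 'a \<Rightarrow> 'a set" where
  "R_class T a = {c \<in> T. R_eq T a c}"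

definition R_classes :: "'a::semigroup_mult set \<Rightarrow> 'a set set" where
  "R_classes T = R_class T ` T"

definition R_class_le :: "'a::semigroup_mult set \<Rightarrow> 'a set \<Rightarrow> 'a set \<Rightarrow> bool" where
  "R_class_le T X Y \<longleftrightarrow> (\<exists>a\<in>X. \<exists>b\<in>Y. R_le T a b)"

definition R_chain :: "'a::semigroup_mult set \<Rightarrow> 'a set set \<Rightarrow> bool" where
  "R_chain T C \<longleftrightarrow> C \<subseteq> R_classes T \<and>
     (\<forall>X\<in>C. \<forall>Y\<in>C. R_class_le T X Y \<or> R_class_le T Y X)"

text \<open>R-height: supremum of cardinalities of chains of R-classes (infinite chains give \<infinity>
  via their finite subchains).\<close>
definition R_height :: "'a::semigroup_mult set \<Rightarrow> enat" where
  "R_height T = Sup {enat (card C) | C. finite C \<and> R_chain T C}"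

definition left_ideal_in :: "'a::semigroup_mult set \<Rightarrow> 'a set \<Rightarrow> bool" where
  "left_ideal_in T I \<longleftrightarrow> I \<noteq> {} \<and> I \<subseteq> T \<and> (\<forall>t\<in>T. \<forall>x\<in>I. t * x \<in> I)"

definition right_ideal_in :: "'a::semigroup_mult set \<Rightarrow> 'a set \<Rightarrow> bool" where
  "right_ideal_in T I \<longleftrightarrow> I \<noteq> {} \<and> I \<subseteq> T \<and> (\<forall>t\<in>T. \<forall>x\<in>I. x * t \<in> I)"

definition ideal_in :: "'a::semigroup_mult set \<Rightarrow> 'a set \<Rightarrow> bool" where
  "ideal_in T I \<longleftrightarrow> left_ideal_in T I \<and> right_ideal_in T I"

definition is_kernel :: "'a::semigroup_mult set \<Rightarrow> bool" where
  "is_kernel K \<longleftrightarrow> ideal_in UNIV K \<and> (\<forall>I. ideal_in UNIV I \<longrightarrow> K \<subseteq> I)"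

definition completely_simple :: "'a::semigroup_mult set \<Rightarrow> bool" where
  "completely_simple T \<longleftrightarrow>
     (\<forall>I. ideal_in T I \<longrightarrow> I = T) \<and>
     (\<exists>R. right_ideal_in T R \<and> (\<forall>R'. right_ideal_in T R' \<and> R' \<subseteq> R \<longrightarrow> R' = R)) \<and>
     (\<exists>L. left_ideal_in T L \<and> (\<forall>L'. left_ideal_in T L' \<and> L' \<subseteq> L \<longrightarrow> L' = L))"

end

theory Submission
  imports Defs
begin

(* Send each R-class of A in a chain to the R-class of S containing it; the image is a chain of
  R-classes of S meeting A, so it has at most n members. Every fibre has at most two members: if
  x, y in A are R-equivalent in S and x lies strictly below y in the R-order of A, then x = x w
  for some w in A, and an element with such a right unit lies R-below, in A, everything in A that
  is R-above it in S. Elements of the completely simple kernel are regular, so they too have right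
  units in A and the fibres over kernel classes are singletons. A kernel class below the whole
  chain together with the classes having two-element fibres is again a chain of R-classes of S
  meeting A, so at most n - 1 fibres have two members. *)

lemma finite_total_preorder_has_least:
  assumes "finite F" "F \<noteq> {}"
    and total: "\<And>x y. x \<in> F \<Longrightarrow> y \<in> F \<Longrightarrow> r x y \<or> r y x"
    and trans: "\<And>x y z. r x y \<Longrightarrow> r y z \<Longrightarrow> r x z"
  shows "\<exists>m\<in>F. \<forall>x\<in>F. r m x"
  using assms(1,2) total
proof (induction F rule: finite_ne_induct)
  case (singleton x)
  then show ?case by auto
next
  case (insert x F)
  then obtain m where "m \<in> F" "\<forall>y\<in>F. r m y" by auto
  then show ?case
    using insert.prems trans by (metis insert_iff)
qed

lemma card_le_card_image_add_card_double_fibres: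
  assumes "finite D" and "\<And>y. card {x \<in> D. f x = y} \<le> 2"
  shows "card D \<le> card (f ` D) + card {y \<in> f ` D. card {x \<in> D. f x = y} = 2}"
proof -
  have "card D = (\<Sum>y\<in>f ` D. card {x \<in> D. f x = y})"
    using \<open>finite D\<close> sum.image_gen[of D "\<lambda>_. 1::nat" f] by simp
  also have "\<dots> \<le> (\<Sum>y\<in>f ` D. 1 + of_bool (card {x \<in> D. f x = y} = 2))"
  proof (rule sum_mono)
    fix y
    show "card {x \<in> D. f x = y} \<le> 1 + of_bool (card {x \<in> D. f x = y} = 2)"
      using assms(2)[of y] by auto
  qed
  also have "\<dots> = card (f ` D) + card {y \<in> f ` D. card {x \<in> D. f x = y} = 2}"
    using \<open>finite D\<close> by (subst sum.distrib) (simp add: Int_def)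
  finally show ?thesis .
qed

section \<open>Green's R-order relative to a subsemigroup\<close>

lemma R_le_refl [simp]: "R_le T a a"
  by (simp add: R_le_def)

lemma R_le_trans:
  assumes closed: "\<And>x y. x \<in> T \<Longrightarrow> y \<in> T \<Longrightarrow> x * y \<in> T"
    and "R_le T a b" and "R_le T b c"
  shows "R_le T a c"
proof (cases "a = b")
  case False
  with \<open>R_le T a b\<close> obtain s where s: "s \<in> T" "a = b * s"
    unfolding R_le_def by blast
  show ?thesis
  proof (cases "b = c")
    case False
    with \<open>R_le T b c\<close> obtain t where t: "t \<in> T" "b = c * t"
      unfolding R_le_def by blast
    have "a = c * (t * s)" using s t by (simp add: mult.assoc)
    then show ?thesis using closed s t unfolding R_le_def by blast
  qed (use \<open>R_le T a b\<close> in simp)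
qed (use \<open>R_le T b c\<close> in simp)

lemma R_le_subset: "R_le T a b \<Longrightarrow> T \<subseteq> T' \<Longrightarrow> R_le T' a b"
  by (auto simp: R_le_def)

lemma R_eq_sym: "R_eq T a b \<Longrightarrow> R_eq T b a"
  by (simp add: R_eq_def)

lemma R_eq_trans:
  assumes closed: "\<And>x y. x \<in> T \<Longrightarrow> y \<in> T \<Longrightarrow> x * y \<in> T"
    and "R_eq T a b" and "R_eq T b c"
  shows "R_eq T a c"
  using assms R_le_trans[OF closed, of a b c] R_le_trans[OF closed, of c b a]
  unfolding R_eq_def by blast

lemma R_class_self: "x \<in> T \<Longrightarrow> x \<in> R_class T x"
  by (simp add: R_class_def R_eq_def)

lemma R_class_eq_iff:
  assumes closed: "\<And>x y. x \<in> T \<Longrightarrow> y \<in> T \<Longrightarrow> x * y \<in> T" and "y \<in> T"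
  shows "R_class T x = R_class T y \<longleftrightarrow> R_eq T x y"
proof
  assume "R_class T x = R_class T y"
  then show "R_eq T x y"
    using R_class_self[OF \<open>y \<in> T\<close>] by (auto simp: R_class_def)
next
  assume "R_eq T x y"
  then show "R_class T x = R_class T y"
    unfolding R_class_def using R_eq_trans[OF closed] R_eq_sym by metis
qed

lemma R_class_le_iff:
  assumes closed: "\<And>x y. x \<in> T \<Longrightarrow> y \<in> T \<Longrightarrow> x * y \<in> T" and "x \<in> T" "y \<in> T"
  shows "R_class_le T (R_class T x) (R_class T y) \<longleftrightarrow> R_le T x y"
proof
  assume "R_class_le T (R_class T x) (R_class T y)"
  then obtain a b where "R_le T x a" "R_le T a b" "R_le T b y"
    unfolding R_class_le_def R_class_def R_eq_def by blast
  then show "R_le T x y"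
    using R_le_trans[OF closed, of x a b] R_le_trans[OF closed, of x b y] by blast
next
  assume "R_le T x y"
  then show "R_class_le T (R_class T x) (R_class T y)"
    unfolding R_class_le_def using R_class_self assms(2,3) by blast
qed

lemma R_chain_R_class_image:
  assumes closed: "\<And>x y. x \<in> T \<Longrightarrow> y \<in> T \<Longrightarrow> x * y \<in> T" and "E \<subseteq> T"
    and "\<And>x y. x \<in> E \<Longrightarrow> y \<in> E \<Longrightarrow> R_le T x y \<or> R_le T y x"
  shows "R_chain T (R_class T ` E)"
  unfolding R_chain_def R_classes_def
proof (intro conjI ballI)
  show "R_class T ` E \<subseteq> R_class T ` T" using \<open>E \<subseteq> T\<close> by blast
  fix X Y assume "X \<in> R_class T ` E" "Y \<in> R_class T ` E"
  then obtain x y where "x \<in> E" "y \<in> E" "X = R_class T x" "Y = R_class T y"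
    by blast
  then show "R_class_le T X Y \<or> R_class_le T Y X"
    using assms(2,3) R_class_le_iff[OF closed] by (simp add: subsetD)
qed

lemma R_height_le:
  assumes "\<And>C. finite C \<Longrightarrow> R_chain T C \<Longrightarrow> card C \<le> m"
  shows "R_height T \<le> enat m"
  unfolding R_height_def using assms by (auto intro!: Sup_least)

lemma R_chain_subset: "R_chain T C \<Longrightarrow> C' \<subseteq> C \<Longrightarrow> R_chain T C'"
  unfolding R_chain_def by blast

lemma R_chain_representatives:
  assumes closed: "\<And>x y. x \<in> T \<Longrightarrow> y \<in> T \<Longrightarrow> x * y \<in> T"
    and "finite C" and "R_chain T C"
  obtains E where "E \<subseteq> T" "finite E" "card E = card C"
    and "\<And>x y. x \<in> E \<Longrightarrow> y \<in> E \<Longrightarrow> R_le T x y \<or> R_le T y x"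
    and "\<And>x y. x \<in> E \<Longrightarrow> y \<in> E \<Longrightarrow> R_eq T x y \<Longrightarrow> x = y"
proof -
  have "\<forall>X\<in>C. \<exists>x. x \<in> T \<and> R_class T x = X"
    using \<open>R_chain T C\<close> unfolding R_chain_def R_classes_def by blast
  then obtain rep where rep: "\<And>X. X \<in> C \<Longrightarrow> rep X \<in> T \<and> R_class T (rep X) = X"
    by metis
  have "inj_on rep C"
    by (metis inj_onI rep)
  moreover have "R_le T (rep X) (rep Y) \<or> R_le T (rep Y) (rep X)" if "X \<in> C" "Y \<in> C" for X Y
    using \<open>R_chain T C\<close> that rep R_class_le_iff[OF closed] unfolding R_chain_def by metis
  moreover have "rep X = rep Y" if "X \<in> C" "Y \<in> C" "R_eq T (rep X) (rep Y)" for X Y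
    using that rep R_class_eq_iff[OF closed] by metis
  ultimately show ?thesis
    using rep \<open>finite C\<close> by (intro that[of "rep ` C"]) (auto simp: card_image)
qed

section \<open>Regularity of completely simple semigroups\<close>

context semigroup
begin

definition right_ideal_on :: "'a set \<Rightarrow> 'a set \<Rightarrow> bool" where
  "right_ideal_on K R \<longleftrightarrow> R \<noteq> {} \<and> R \<subseteq> K \<and> (\<forall>t\<in>K. \<forall>x\<in>R. x \<^bold>* t \<in> R)"

definition minimal_right_ideal_on :: "'a set \<Rightarrow> 'a set \<Rightarrow> bool" where
  "minimal_right_ideal_on K R \<longleftrightarrow>
     right_ideal_on K R \<and> (\<forall>R'. right_ideal_on K R' \<and> R' \<subseteq> R \<longrightarrow> R' = R)"

lemma minimal_right_ideal_on_translate: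
  assumes closed: "\<And>x y. x \<in> K \<Longrightarrow> y \<in> K \<Longrightarrow> x \<^bold>* y \<in> K"
    and R: "minimal_right_ideal_on K R" and s: "s \<in> K"
  shows "minimal_right_ideal_on K (f s ` R)"
proof -
  have R_ideal: "R \<noteq> {}" "R \<subseteq> K" "\<And>x t. x \<in> R \<Longrightarrow> t \<in> K \<Longrightarrow> x \<^bold>* t \<in> R"
    using R by (auto simp: minimal_right_ideal_on_def right_ideal_on_def)
  have "right_ideal_on K (f s ` R)"
    using R_ideal s closed by (auto simp: right_ideal_on_def assoc)
  moreover have "M = f s ` R" if M: "right_ideal_on K M" "M \<subseteq> f s ` R" for M
  proof -
    define R' where "R' = {r \<in> R. s \<^bold>* r \<in> M}"
    have "right_ideal_on K R'"
      unfolding right_ideal_on_def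
    proof (intro conjI ballI)
      show "R' \<noteq> {}" using M by (force simp: right_ideal_on_def R'_def)
      show "R' \<subseteq> K" using R_ideal by (auto simp: R'_def)
      show "x \<^bold>* t \<in> R'" if "t \<in> K" "x \<in> R'" for t x
        using M(1) R_ideal(3) that by (auto simp: right_ideal_on_def R'_def simp flip: assoc)
    qed
    then have "R' = R"
      using R by (auto simp: minimal_right_ideal_on_def R'_def)
    then show ?thesis
      using M(2) by (auto simp: R'_def)
  qed
  ultimately show ?thesis
    by (auto simp: minimal_right_ideal_on_def)
qed

lemma mem_right_ideal_of_square:
  assumes closed: "\<And>x y. x \<in> K \<Longrightarrow> y \<in> K \<Longrightarrow> x \<^bold>* y \<in> K"
    and simple: "\<And>I. I \<noteq> {} \<Longrightarrow> I \<subseteq> K \<Longrightarrow> (\<forall>t\<in>K. \<forall>x\<in>I. t \<^bold>* x \<in> I \<and> x \<^bold>* t \<in> I) \<Longrightarrow> I = K"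
    and R: "minimal_right_ideal_on K R" and b: "b \<in> K"
  shows "b = b \<^bold>* b \<or> (\<exists>z\<in>K. b = b \<^bold>* b \<^bold>* z)"
proof -
  \<comment> \<open>K = K R puts b into a minimal right ideal s R, which then equals the right ideal
    generated by b b.\<close>
  have R_ideal: "R \<noteq> {}" "R \<subseteq> K" "\<And>x t. x \<in> R \<Longrightarrow> t \<in> K \<Longrightarrow> x \<^bold>* t \<in> R"
    using R by (auto simp: minimal_right_ideal_on_def right_ideal_on_def)
  have "{s \<^bold>* r | s r. s \<in> K \<and> r \<in> R} = K"
  proof (rule simple)
    show "{s \<^bold>* r | s r. s \<in> K \<and> r \<in> R} \<noteq> {}" using R_ideal b by blast
    show "{s \<^bold>* r | s r. s \<in> K \<and> r \<in> R} \<subseteq> K" using R_ideal closed by blast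
    show "\<forall>t\<in>K. \<forall>x\<in>{s \<^bold>* r | s r. s \<in> K \<and> r \<in> R}.
        t \<^bold>* x \<in> {s \<^bold>* r | s r. s \<in> K \<and> r \<in> R} \<and> x \<^bold>* t \<in> {s \<^bold>* r | s r. s \<in> K \<and> r \<in> R}"
    proof (intro ballI conjI)
      fix t x assume t: "t \<in> K" and "x \<in> {s \<^bold>* r | s r. s \<in> K \<and> r \<in> R}"
      then obtain s r where sr: "s \<in> K" "r \<in> R" "x = s \<^bold>* r" by blast
      have "t \<^bold>* x = (t \<^bold>* s) \<^bold>* r" and "x \<^bold>* t = s \<^bold>* (r \<^bold>* t)"
        using sr(3) by (simp_all add: assoc)
      then show "t \<^bold>* x \<in> {s \<^bold>* r | s r. s \<in> K \<and> r \<in> R}"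
        and "x \<^bold>* t \<in> {s \<^bold>* r | s r. s \<in> K \<and> r \<in> R}"
        using sr t closed R_ideal(3) by blast+
    qed
  qed
  then obtain s where s: "s \<in> K" "b \<in> f s ` R"
    using b by blast
  define M where "M = f s ` R"
  have M: "minimal_right_ideal_on K M"
    unfolding M_def using closed R s(1) by (rule minimal_right_ideal_on_translate)
  have "right_ideal_on K (insert (b \<^bold>* b) (f (b \<^bold>* b) ` K))"
    using b closed by (auto simp: right_ideal_on_def assoc)
  moreover have "insert (b \<^bold>* b) (f (b \<^bold>* b) ` K) \<subseteq> M"
  proof -
    have "\<And>x t. x \<in> M \<Longrightarrow> t \<in> K \<Longrightarrow> x \<^bold>* t \<in> M"
      using M by (auto simp: minimal_right_ideal_on_def right_ideal_on_def)
    then show ?thesis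
      using s(2) b closed by (auto simp: M_def)
  qed
  ultimately have "insert (b \<^bold>* b) (f (b \<^bold>* b) ` K) = M"
    using M by (auto simp: minimal_right_ideal_on_def)
  then show ?thesis
    using s(2) by (auto simp: M_def)
qed

end

lemma completely_simple_regular:
  fixes K :: "'a::semigroup_mult set"
  assumes cs: "completely_simple K" and closed: "\<And>x y. x \<in> K \<Longrightarrow> y \<in> K \<Longrightarrow> x * y \<in> K"
    and b: "b \<in> K"
  shows "\<exists>z\<in>K. b = b * z * b"
proof -
  interpret dual: semigroup "\<lambda>x y :: 'a. y * x"
    by unfold_locales (simp add: mult.assoc)
  have simple: "I = K" if "I \<noteq> {}" "I \<subseteq> K" "\<forall>t\<in>K. \<forall>x\<in>I. t * x \<in> I \<and> x * t \<in> I" for I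
    using cs that by (auto simp: completely_simple_def ideal_in_def left_ideal_in_def right_ideal_in_def)
  obtain R where R: "mult.minimal_right_ideal_on K R"
    using cs by (auto simp: completely_simple_def mult.minimal_right_ideal_on_def
        mult.right_ideal_on_def right_ideal_in_def)
  obtain L where L: "dual.minimal_right_ideal_on K L"
    using cs by (auto simp: completely_simple_def dual.minimal_right_ideal_on_def
        dual.right_ideal_on_def left_ideal_in_def)
  have right: "b = b * b \<or> (\<exists>z\<in>K. b = b * b * z)"
    using closed simple R b by (rule mult.mem_right_ideal_of_square)
  have left: "b = b * b \<or> (\<exists>z\<in>K. b = z * (b * b))"
    using closed simple L b by (rule dual.mem_right_ideal_of_square) blast+
  show ?thesis
  proof (cases "b = b * b")
    case True
    then have "b = b * b * b" by simp
    then show ?thesis using b by blast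
  next
    case False
    then obtain z w where z: "z \<in> K" "b = b * b * z" and w: "b = w * (b * b)"
      using right left by blast
    have "b * z = w * b"
      by (metis mult.assoc w z(2))
    then have "b = b * z * b"
      by (metis mult.assoc w)
    then show ?thesis using z(1) by blast
  qed
qed

section \<open>R-classes of a left ideal\<close>

lemma left_ideal_in_UNIV_mult: "left_ideal_in UNIV A \<Longrightarrow> x \<in> A \<Longrightarrow> t * x \<in> A"
  by (simp add: left_ideal_in_def)

lemma R_le_left_ideal_if_right_unit:
  assumes A: "left_ideal_in UNIV A" and w: "w \<in> A" "b = b * w" and "R_le UNIV b a"
  shows "R_le A b a"
proof (cases "b = a")
  case False
  with \<open>R_le UNIV b a\<close> obtain s where "b = a * s"
    unfolding R_le_def by blast
  then have "b = a * (s * w)"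
    using w(2) by (metis mult.assoc)
  moreover have "s * w \<in> A"
    using A w(1) by (rule left_ideal_in_UNIV_mult)
  ultimately show ?thesis
    unfolding R_le_def by blast
qed simp

lemma right_unit_if_R_le_left_ideal:
  assumes A: "left_ideal_in UNIV A" and "R_le A b a" "b \<noteq> a" "R_le UNIV a b"
  shows "\<exists>w\<in>A. b = b * w"
proof -
  obtain u where u: "u \<in> A" "b = a * u"
    using \<open>R_le A b a\<close> \<open>b \<noteq> a\<close> unfolding R_le_def by blast
  obtain v where "a = b * v"
    using \<open>R_le UNIV a b\<close> \<open>b \<noteq> a\<close> unfolding R_le_def by blast
  then have "b = b * (v * u)"
    using u(2) by (metis mult.assoc)
  moreover have "v * u \<in> A"
    using A u(1) by (rule left_ideal_in_UNIV_mult)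
  ultimately show ?thesis by blast
qed

lemma card_R_fibre_in_left_ideal:
  assumes A: "left_ideal_in UNIV A" and F: "finite F" "F \<subseteq> A"
    and total: "\<And>x y. x \<in> F \<Longrightarrow> y \<in> F \<Longrightarrow> R_le A x y \<or> R_le A y x"
    and antisym: "\<And>x y. x \<in> F \<Longrightarrow> y \<in> F \<Longrightarrow> R_eq A x y \<Longrightarrow> x = y"
    and fibre: "\<And>x y. x \<in> F \<Longrightarrow> y \<in> F \<Longrightarrow> R_eq UNIV x y"
  shows card_R_fibre_le_2: "card F \<le> 2"
    and card_R_fibre_le_1: "(\<And>x. x \<in> F \<Longrightarrow> \<exists>w\<in>A. x = x * w) \<Longrightarrow> card F \<le> 1"
proof -
  define U where "U = {x \<in> F. \<exists>w\<in>A. x = x * w}"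
  have "x = y" if xy: "x \<in> U" "y \<in> U" for x y
  proof -
    obtain wx wy where "wx \<in> A" "x = x * wx" "wy \<in> A" "y = y * wy"
      using xy unfolding U_def by blast
    moreover have "R_eq UNIV x y"
      using xy fibre by (auto simp: U_def)
    ultimately have "R_eq A x y"
      using R_le_left_ideal_if_right_unit[OF A] unfolding R_eq_def by blast
    then show ?thesis
      using antisym xy by (auto simp: U_def)
  qed
  then have card_U: "card U \<le> 1"
    using F(1) by (simp add: U_def card_le_Suc0_iff_eq)
  \<comment> \<open>Of two distinct elements of a fibre, the R-smaller one in A has a right unit in A.\<close>
  have "x = y" if x: "x \<in> F - U" and y: "y \<in> F - U" for x y
  proof (rule ccontr)
    assume "x \<noteq> y"
    have "R_eq UNIV x y"
      using x y fibre by blast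
    then have "(\<exists>w\<in>A. x = x * w) \<or> (\<exists>w\<in>A. y = y * w)"
      using total[of x y] x y \<open>x \<noteq> y\<close> right_unit_if_R_le_left_ideal[OF A]
      unfolding R_eq_def by blast
    then show False
      using x y by (auto simp: U_def)
  qed
  then have card_F_U: "card (F - U) \<le> 1"
    using F(1) by (simp add: card_le_Suc0_iff_eq)
  have "card F \<le> card U + card (F - U)"
    using card_Un_le[of U "F - U"] by (simp add: U_def Un_absorb1)
  then show "card F \<le> 2"
    using card_U card_F_U by linarith
  show "card F \<le> 1" if "\<And>x. x \<in> F \<Longrightarrow> \<exists>w\<in>A. x = x * w"
  proof -
    have "F = U"
      using that by (auto simp: U_def)
    then show ?thesis using card_U by simp
  qed
qed

lemma kernel_mem_if_R_le:
  assumes "is_kernel K" "k \<in> K" "R_le UNIV x k"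
  shows "x \<in> K"
  using assms by (auto simp: R_le_def is_kernel_def ideal_in_def right_ideal_in_def)

lemma kernel_right_unit_in_left_ideal:
  assumes K: "is_kernel K" "completely_simple K" and A: "left_ideal_in UNIV A"
    and b: "b \<in> K" "b \<in> A"
  shows "\<exists>w\<in>A. b = b * w"
proof -
  have "x * y \<in> K" if "x \<in> K" for x y
    using K(1) that by (auto simp: is_kernel_def ideal_in_def right_ideal_in_def)
  then obtain z where "b = b * z * b"
    using completely_simple_regular[OF K(2) _ b(1)] by blast
  moreover have "z * b \<in> A"
    using A b(2) by (rule left_ideal_in_UNIV_mult)
  ultimately show ?thesis
    by (metis mult.assoc)
qed

lemma kernel_lower_bound_in_left_ideal:
  fixes E :: "'a::semigroup_mult set"
  assumes K: "is_kernel K" and A: "left_ideal_in UNIV A"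
    and E: "finite E" "E \<noteq> {}" "E \<subseteq> A"
    and comparable: "\<And>x y. x \<in> E \<Longrightarrow> y \<in> E \<Longrightarrow> R_le UNIV x y \<or> R_le UNIV y x"
  obtains k where "k \<in> K" "k \<in> A" "\<And>x. x \<in> E \<Longrightarrow> R_le UNIV k x"
proof -
  have R_le_UNIV_trans: "R_le UNIV x z" if "R_le UNIV x y" "R_le UNIV y z" for x y z :: 'a
    using R_le_trans[of UNIV] that by blast
  have "\<exists>x0\<in>E. \<forall>x\<in>E. R_le UNIV x0 x"
    using E(1,2) comparable R_le_UNIV_trans by (rule finite_total_preorder_has_least)
  then obtain x0 where x0: "x0 \<in> E" "\<And>x. x \<in> E \<Longrightarrow> R_le UNIV x0 x"
    by blast
  obtain c where c: "c \<in> K"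
    using K by (auto simp: is_kernel_def ideal_in_def left_ideal_in_def)
  define k where "k = x0 * (c * x0)"
  have "k \<in> K"
    using K c by (auto simp: k_def is_kernel_def ideal_in_def left_ideal_in_def right_ideal_in_def)
  moreover have "k \<in> A"
    using x0(1) E(3) by (auto simp: k_def intro!: left_ideal_in_UNIV_mult[OF A])
  moreover have "R_le UNIV k x" if "x \<in> E" for x
    using R_le_UNIV_trans[of k x0 x] x0(2)[OF that] by (auto simp: k_def R_le_def)
  ultimately show ?thesis
    using that by blast
qed

lemma card_R_class_fibre_in_left_ideal:
  fixes A E :: "'a::semigroup_mult set"
  assumes A: "left_ideal_in UNIV A" and E: "finite E" "E \<subseteq> A"
    and comparable: "\<And>x y. x \<in> E \<Longrightarrow> y \<in> E \<Longrightarrow> R_le A x y \<or> R_le A y x"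
    and antisym: "\<And>x y. x \<in> E \<Longrightarrow> y \<in> E \<Longrightarrow> R_eq A x y \<Longrightarrow> x = y"
  shows card_R_class_fibre_le_2: "card {x \<in> E. R_class UNIV x = p} \<le> 2"
    and card_R_class_fibre_kernel:
      "is_kernel K \<Longrightarrow> completely_simple K \<Longrightarrow> k \<in> K \<Longrightarrow>
        card {x \<in> E. R_class UNIV x = R_class UNIV k} \<le> 1"
proof -
  have R_class_eq_iff_UNIV: "R_class UNIV x = R_class UNIV y \<longleftrightarrow> R_eq UNIV x y" for x y :: 'a
    by (rule R_class_eq_iff) simp_all
  have fibre: "finite {x \<in> E. R_class UNIV x = p}" "{x \<in> E. R_class UNIV x = p} \<subseteq> A"
    "\<And>x y. x \<in> {x \<in> E. R_class UNIV x = p} \<Longrightarrow> y \<in> {x \<in> E. R_class UNIV x = p} \<Longrightarrow>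
      R_le A x y \<or> R_le A y x"
    "\<And>x y. x \<in> {x \<in> E. R_class UNIV x = p} \<Longrightarrow> y \<in> {x \<in> E. R_class UNIV x = p} \<Longrightarrow>
      R_eq A x y \<Longrightarrow> x = y"
    "\<And>x y. x \<in> {x \<in> E. R_class UNIV x = p} \<Longrightarrow> y \<in> {x \<in> E. R_class UNIV x = p} \<Longrightarrow>
      R_eq UNIV x y" for p
    using E comparable antisym R_class_eq_iff_UNIV by (auto intro: R_eq_sym)
  show "card {x \<in> E. R_class UNIV x = p} \<le> 2"
    by (rule card_R_fibre_le_2[OF A]; rule fibre)
  assume K: "is_kernel K" "completely_simple K" and "k \<in> K"
  have right_unit: "\<exists>w\<in>A. x = x * w" if x: "x \<in> {x \<in> E. R_class UNIV x = R_class UNIV k}" for x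
  proof -
    have "R_le UNIV x k"
      using x R_class_eq_iff_UNIV by (simp add: R_eq_def)
    then have "x \<in> K"
      by (rule kernel_mem_if_R_le[OF K(1) \<open>k \<in> K\<close>])
    moreover have "x \<in> A"
      using x E(2) by blast
    ultimately show ?thesis
      by (rule kernel_right_unit_in_left_ideal[OF K A])
  qed
  show "card {x \<in> E. R_class UNIV x = R_class UNIV k} \<le> 1"
    by (rule card_R_fibre_le_1[OF A]; rule fibre right_unit)
qed

lemma card_R_chain_in_left_ideal_le:
  fixes A K E :: "'a::semigroup_mult set"
  assumes K: "is_kernel K" "completely_simple K" and A: "left_ideal_in UNIV A"
    and E: "finite E" "E \<subseteq> A"
    and comparable: "\<And>x y. x \<in> E \<Longrightarrow> y \<in> E \<Longrightarrow> R_le A x y \<or> R_le A y x"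
    and antisym: "\<And>x y. x \<in> E \<Longrightarrow> y \<in> E \<Longrightarrow> R_eq A x y \<Longrightarrow> x = y"
    and n: "\<And>C. finite C \<Longrightarrow> R_chain UNIV C \<Longrightarrow> \<forall>X\<in>C. X \<inter> A \<noteq> {} \<Longrightarrow> card C \<le> n"
  shows "card E \<le> 2 * n - 1"
proof (cases "E = {}")
  case False
  define doubled where "doubled = {p \<in> R_class UNIV ` E. card {x \<in> E. R_class UNIV x = p} = 2}"
  have chain: "R_chain UNIV (R_class UNIV ` E')"
    if "\<And>x y. x \<in> E' \<Longrightarrow> y \<in> E' \<Longrightarrow> R_le UNIV x y \<or> R_le UNIV y x" for E' :: "'a set"
    using that by (intro R_chain_R_class_image) simp_all
  have meets_A: "\<forall>X\<in>R_class UNIV ` E'. X \<inter> A \<noteq> {}" if "E' \<subseteq> A" for E'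
    using that R_class_self[of _ UNIV] by auto
  have comparable_UNIV: "R_le UNIV x y \<or> R_le UNIV y x" if "x \<in> E" "y \<in> E" for x y
    using comparable[OF that] R_le_subset by blast
  have "card E \<le> card (R_class UNIV ` E) + card doubled"
    unfolding doubled_def
    using E(1) card_R_class_fibre_le_2[OF A E comparable antisym]
    by (rule card_le_card_image_add_card_double_fibres)
  moreover have "card (R_class UNIV ` E) \<le> n"
    using E(1) chain[OF comparable_UNIV] meets_A[OF E(2)] by (intro n) simp_all
  moreover obtain k where k: "k \<in> K" "k \<in> A" "\<And>x. x \<in> E \<Longrightarrow> R_le UNIV k x"
    using kernel_lower_bound_in_left_ideal[OF K(1) A E(1) False E(2) comparable_UNIV] by blast
  have "R_class UNIV k \<notin> doubled"
    using card_R_class_fibre_kernel[OF A E comparable antisym K k(1)] by (simp add: doubled_def)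
  moreover have "card (insert (R_class UNIV k) doubled) \<le> n"
  proof (rule n)
    have sub: "insert (R_class UNIV k) doubled \<subseteq> R_class UNIV ` insert k E"
      by (auto simp: doubled_def)
    moreover have "R_chain UNIV (R_class UNIV ` insert k E)"
      using k(3) comparable_UNIV by (intro chain) auto
    ultimately show "R_chain UNIV (insert (R_class UNIV k) doubled)"
      by (rule R_chain_subset[rotated])
    have "\<forall>X\<in>R_class UNIV ` insert k E. X \<inter> A \<noteq> {}"
      using k(2) E(2) by (intro meets_A) simp
    with sub show "\<forall>X\<in>insert (R_class UNIV k) doubled. X \<inter> A \<noteq> {}"
      by (meson subsetD)
    show "finite (insert (R_class UNIV k) doubled)"
      using E(1) by (simp add: doubled_def)
  qed
  ultimately show ?thesis
    using E(1) by (simp add: doubled_def)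
qed simp

theorem theorem3p10:
  fixes A :: "'a::semigroup_mult set" and n :: nat
  assumes "R_height (UNIV :: 'a set) < \<infinity>"
    and "\<exists>K :: 'a set. is_kernel K \<and> completely_simple K"
    and "left_ideal_in UNIV A"
    and "Sup {enat (card C) | C. finite C \<and> R_chain (UNIV :: 'a set) C \<and> (\<forall>X\<in>C. X \<inter> A \<noteq> {})} = enat n"
  shows "R_height A \<le> enat (2 * n - 1)"
proof -
  obtain K :: "'a set" where K: "is_kernel K" "completely_simple K"
    using assms(2) by blast
  have A_closed: "x * y \<in> A" if "x \<in> A" "y \<in> A" for x y
    using assms(3) that(2) by (rule left_ideal_in_UNIV_mult)
  have n: "card C \<le> n" if "finite C" "R_chain UNIV C" "\<forall>X\<in>C. X \<inter> A \<noteq> {}" for C :: "'a set set"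
  proof -
    have "enat (card C) \<le> Sup {enat (card C) | C. finite C \<and> R_chain UNIV C \<and> (\<forall>X\<in>C. X \<inter> A \<noteq> {})}"
      using that by (intro Sup_upper) blast
    then show ?thesis
      using assms(4) by simp
  qed
  show ?thesis
  proof (rule R_height_le)
    fix C assume "finite C" "R_chain A C"
    then obtain E where E: "E \<subseteq> A" "finite E" "card E = card C"
      and "\<And>x y. x \<in> E \<Longrightarrow> y \<in> E \<Longrightarrow> R_le A x y \<or> R_le A y x"
      and "\<And>x y. x \<in> E \<Longrightarrow> y \<in> E \<Longrightarrow> R_eq A x y \<Longrightarrow> x = y"
      using R_chain_representatives[OF A_closed] by blast
    then have "card E \<le> 2 * n - 1"
      using K assms(3) n by (intro card_R_chain_in_left_ideal_le[of K A E n]) blast+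
    then show "card C \<le> 2 * n - 1"
      using E(3) by simp
  qed
qed

end
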